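(* For every slat-doctrine $P:\mathcal{C}^{\mathrm{op}}\to\mathbf{Pos}$, its universal completion $P^{un}$ is a universal slat-doctrine.
   Context: A slat-doctrine is a functor $P:\mathcal{C}^{\mathrm{op}}\to\mathbf{Pos}$ with $\mathcal{C}$ having finite products; $P_f:P(Y)\to P(X)$ is reindexing along $f:X\to Y$. It is universal if for all $A_1,A_2$ and $i=1,2$ the map $P_{\mathrm{pr}_i}:P(A_i)\to P(A_1\times A_2)$ has a right adjoint $\forall_{\mathrm{pr}_i}$ and these satisfy Beck–Chevalley: for every pullback of a projection $\mathrm{pr}:X\to A$ along $f:A'\to A$, with resulting projection $\mathrm{pr}':X'\to A'$ and $f':X'\to X$, $\forall_{\mathrm{pr}'}P_{f'}=P_f\forall_{\mathrm{pr}}$. Universal completion: $P^{un}(A)$ is the poset (reflection of the preorder) of triples $(A,B,\alpha)$ with $B$ an object of $\mathcal{C}$ and $\alpha\in P(A\times B)$, where $(A,B,\alpha)\le(A,C,\beta)$ iff there is an arrow $g:A\times C\to B$ with $P_{\langle\mathrm{pr}_A,g\rangle}(\alpha)\le\beta$; for $f:A\to C$, $P^{un}_f(C,D,\gamma)=(A,D,P_{f\times 1_D}(\gamma))$. *)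

theory Defs
  imports Main
begin

record ('o,'a) fpcat =
  Ob  :: "'o set"
  Ar  :: "'a set"
  cdom :: "'a \<Rightarrow> 'o"
  ccod :: "'a \<Rightarrow> 'o"
  cmp :: "'a \<Rightarrow> 'a \<Rightarrow> 'a"   (* cmp g f = g \<circ> f *)
  cid :: "'o \<Rightarrow> 'a"
  prd :: "'o \<Rightarrow> 'o \<Rightarrow> 'o"
  pj1 :: "'o \<Rightarrow> 'o \<Rightarrow> 'a"
  pj2 :: "'o \<Rightarrow> 'o \<Rightarrow> 'a"
  tup :: "'a \<Rightarrow> 'a \<Rightarrow> 'a"
  trm :: "'o"
  bang :: "'o \<Rightarrow> 'a"

definition hom :: "('o,'a,'m) fpcat_scheme \<Rightarrow> 'o \<Rightarrow> 'o \<Rightarrow> 'a set" where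
  "hom C X Y = {f \<in> Ar C. cdom C f = X \<and> ccod C f = Y}"

definition category :: "('o,'a,'m) fpcat_scheme \<Rightarrow> bool" where
  "category C \<longleftrightarrow>
     (\<forall>f\<in>Ar C. cdom C f \<in> Ob C \<and> ccod C f \<in> Ob C) \<and>
     (\<forall>A\<in>Ob C. cid C A \<in> hom C A A) \<and>
     (\<forall>f\<in>Ar C. \<forall>g\<in>Ar C. ccod C f = cdom C g \<longrightarrow>
        cmp C g f \<in> hom C (cdom C f) (ccod C g)) \<and>
     (\<forall>f\<in>Ar C. cmp C f (cid C (cdom C f)) = f \<and> cmp C (cid C (ccod C f)) f = f) \<and>
     (\<forall>f\<in>Ar C. \<forall>g\<in>Ar C. \<forall>h\<in>Ar C. ccod C f = cdom C g \<longrightarrow> ccod C g = cdom C h \<longrightarrow>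
        cmp C h (cmp C g f) = cmp C (cmp C h g) f)"

definition fp_category :: "('o,'a,'m) fpcat_scheme \<Rightarrow> bool" where
  "fp_category C \<longleftrightarrow> category C \<and>
     (\<forall>A\<in>Ob C. \<forall>B\<in>Ob C.
        prd C A B \<in> Ob C \<and>
        pj1 C A B \<in> hom C (prd C A B) A \<and>
        pj2 C A B \<in> hom C (prd C A B) B \<and>
        (\<forall>X\<in>Ob C. \<forall>f\<in>hom C X A. \<forall>g\<in>hom C X B.
            tup C f g \<in> hom C X (prd C A B) \<and>
            cmp C (pj1 C A B) (tup C f g) = f \<and>
            cmp C (pj2 C A B) (tup C f g) = g \<and>
            (\<forall>h\<in>hom C X (prd C A B).
               cmp C (pj1 C A B) h = f \<and> cmp C (pj2 C A B) h = g \<longrightarrow> h = tup C f g))) \<and>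
     trm C \<in> Ob C \<and>
     (\<forall>X\<in>Ob C. bang C X \<in> hom C X (trm C) \<and> (\<forall>h\<in>hom C X (trm C). h = bang C X))"

definition fprod :: "('o,'a,'m) fpcat_scheme \<Rightarrow> 'a \<Rightarrow> 'a \<Rightarrow> 'a" where
  "fprod C f g = tup C (cmp C f (pj1 C (cdom C f) (cdom C g)))
                       (cmp C g (pj2 C (cdom C f) (cdom C g)))"

text \<open>A functor \<open>P : C^op \<rightarrow> Pos\<close>: carrier \<open>carr P A\<close> with order \<open>le P A\<close>,
and reindexing \<open>rmap P f : P(Y) \<rightarrow> P(X)\<close> for \<open>f : X \<rightarrow> Y\<close>.\<close>
record ('o,'a,'e) doctrine =
  carr :: "'o \<Rightarrow> 'e set"
  le   :: "'o \<Rightarrow> 'e \<Rightarrow> 'e \<Rightarrow> bool"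
  rmap :: "'a \<Rightarrow> 'e \<Rightarrow> 'e"

definition slat_doctrine :: "('o,'a,'m) fpcat_scheme \<Rightarrow> ('o,'a,'e) doctrine \<Rightarrow> bool" where
  "slat_doctrine C P \<longleftrightarrow> fp_category C \<and>
     (\<forall>A\<in>Ob C.
        (\<forall>x\<in>carr P A. le P A x x) \<and>
        (\<forall>x\<in>carr P A. \<forall>y\<in>carr P A. \<forall>z\<in>carr P A. le P A x y \<longrightarrow> le P A y z \<longrightarrow> le P A x z) \<and>
        (\<forall>x\<in>carr P A. \<forall>y\<in>carr P A. le P A x y \<longrightarrow> le P A y x \<longrightarrow> x = y)) \<and>
     (\<forall>f\<in>Ar C. \<forall>y\<in>carr P (ccod C f). rmap P f y \<in> carr P (cdom C f)) \<and>
     (\<forall>f\<in>Ar C. \<forall>y\<in>carr P (ccod C f). \<forall>y'\<in>carr P (ccod C f).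
        le P (ccod C f) y y' \<longrightarrow> le P (cdom C f) (rmap P f y) (rmap P f y')) \<and>
     (\<forall>A\<in>Ob C. \<forall>x\<in>carr P A. rmap P (cid C A) x = x) \<and>
     (\<forall>f\<in>Ar C. \<forall>g\<in>Ar C. ccod C f = cdom C g \<longrightarrow>
        (\<forall>z\<in>carr P (ccod C g). rmap P (cmp C g f) z = rmap P f (rmap P g z)))"

text \<open>Universal doctrine: right adjoints \<open>\<forall>_{pr_i}\<close> to reindexing along the product
projections, satisfying Beck--Chevalley for the pullback squares of projections
(the pullback of \<open>pr_1 : A \<times> B \<rightarrow> A\<close> along \<open>f : A' \<rightarrow> A\<close> is \<open>pr_1 : A' \<times> B \<rightarrow> A'\<close>
with \<open>f' = f \<times> 1_B\<close>, and symmetrically for \<open>pr_2\<close>).\<close>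
definition universal_doctrine :: "('o,'a,'m) fpcat_scheme \<Rightarrow> ('o,'a,'e) doctrine \<Rightarrow> bool" where
  "universal_doctrine C P \<longleftrightarrow> slat_doctrine C P \<and>
     (\<exists>fa1 fa2 :: 'o \<Rightarrow> 'o \<Rightarrow> 'e \<Rightarrow> 'e.
        (\<forall>A1\<in>Ob C. \<forall>A2\<in>Ob C.
           (\<forall>y\<in>carr P (prd C A1 A2). fa1 A1 A2 y \<in> carr P A1) \<and>
           (\<forall>x\<in>carr P A1. \<forall>y\<in>carr P (prd C A1 A2).
              le P (prd C A1 A2) (rmap P (pj1 C A1 A2) x) y \<longleftrightarrow> le P A1 x (fa1 A1 A2 y)) \<and>
           (\<forall>y\<in>carr P (prd C A1 A2). fa2 A1 A2 y \<in> carr P A2) \<and>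
           (\<forall>x\<in>carr P A2. \<forall>y\<in>carr P (prd C A1 A2).
              le P (prd C A1 A2) (rmap P (pj2 C A1 A2) x) y \<longleftrightarrow> le P A2 x (fa2 A1 A2 y))) \<and>
        (\<forall>A\<in>Ob C. \<forall>B\<in>Ob C. \<forall>A'\<in>Ob C. \<forall>f\<in>hom C A' A.
           (\<forall>y\<in>carr P (prd C A B).
              fa1 A' B (rmap P (fprod C f (cid C B)) y) = rmap P f (fa1 A B y)) \<and>
           (\<forall>y\<in>carr P (prd C B A).
              fa2 B A' (rmap P (fprod C (cid C B) f) y) = rmap P f (fa2 B A y))))"

text \<open>Raw elements of \<open>P^un(A)\<close>: pairs \<open>(B, \<alpha>)\<close> with \<open>\<alpha> \<in> P(A \<times> B)\<close>
(standing for the triple \<open>(A,B,\<alpha>)\<close>).\<close>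
definition un_raw :: "('o,'a,'m) fpcat_scheme \<Rightarrow> ('o,'a,'e) doctrine \<Rightarrow> 'o \<Rightarrow> ('o \<times> 'e) set" where
  "un_raw C P A = {(B, \<alpha>). B \<in> Ob C \<and> \<alpha> \<in> carr P (prd C A B)}"

definition un_pre :: "('o,'a,'m) fpcat_scheme \<Rightarrow> ('o,'a,'e) doctrine \<Rightarrow> 'o \<Rightarrow> ('o \<times> 'e) \<Rightarrow> ('o \<times> 'e) \<Rightarrow> bool" where
  "un_pre C P A p q = (case p of (B, \<alpha>) \<Rightarrow> case q of (D, \<beta>) \<Rightarrow>
      \<exists>g\<in>hom C (prd C A D) B.
        le P (prd C A D) (rmap P (tup C (pj1 C A D) g) \<alpha>) \<beta>)"

definition un_equiv :: "('o,'a,'m) fpcat_scheme \<Rightarrow> ('o,'a,'e) doctrine \<Rightarrow> 'o \<Rightarrow> ('o \<times> 'e) \<Rightarrow> ('o \<times> 'e) \<Rightarrow> bool" where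
  "un_equiv C P A p q \<longleftrightarrow> un_pre C P A p q \<and> un_pre C P A q p"

definition un_class :: "('o,'a,'m) fpcat_scheme \<Rightarrow> ('o,'a,'e) doctrine \<Rightarrow> 'o \<Rightarrow> ('o \<times> 'e) \<Rightarrow> ('o \<times> 'e) set" where
  "un_class C P A p = {q \<in> un_raw C P A. un_equiv C P A p q}"

text \<open>The poset reflection: equivalence classes, ordered by the preorder on representatives;
reindexing along \<open>f : A \<rightarrow> C\<close> sends the class of \<open>(D,\<gamma>)\<close> to that of \<open>(D, P_{f\<times>1_D}(\<gamma>))\<close>.\<close>
definition un_completion :: "('o,'a,'m) fpcat_scheme \<Rightarrow> ('o,'a,'e) doctrine \<Rightarrow> ('o,'a,('o \<times> 'e) set) doctrine" where
  "un_completion C P =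
     \<lparr> carr = (\<lambda>A. un_class C P A ` un_raw C P A),
       le = (\<lambda>A X Y. \<exists>p\<in>X. \<exists>q\<in>Y. un_pre C P A p q),
       rmap = (\<lambda>f X. \<Union>(D, \<gamma>)\<in>X. un_class C P (cdom C f) (D, rmap P (fprod C f (cid C D)) \<gamma>)) \<rparr>"

end

theory Submission
  imports Defs
begin

(* An element (B, \<alpha>) of P^un(A) stands for the formula "for all b : B, \<alpha>(a, b)", and
   (B, \<alpha>) \<le> (D, \<beta>) says that the bound variable b can be instantiated by a term g(a, d)
   so that \<alpha>(a, g(a, d)) \<le> \<beta>(a, d).  Hence quantifying (D, \<alpha>), \<alpha> \<in> P((A1 \<times> A2) \<times> D),
   over A2 just moves A2 into the bound variables: \<forall>(D, \<alpha>) = (A2 \<times> D, \<alpha> reassociated).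
   Instantiations (A1 \<times> A2) \<times> D \<rightarrow> B and A1 \<times> (A2 \<times> D) \<rightarrow> B correspond through the
   associativity isomorphism, which gives the adjunction, and Beck-Chevalley is the
   naturality of that isomorphism.  All constructions are monotone on representatives,
   so they descend to the poset reflection. *)

section \<open>Categories with finite products\<close>

locale fp_cat =
  fixes C :: "('o,'a,'m) fpcat_scheme"
  assumes fp_category: "fp_category C"
begin

abbreviation comp (infixr "\<cdot>" 55) where "g \<cdot> f \<equiv> cmp C g f"
abbreviation prod_ob (infixr "\<otimes>" 65) where "A \<otimes> B \<equiv> prd C A B"
abbreviation pair ("\<langle>_,/ _\<rangle>") where "\<langle>f, g\<rangle> \<equiv> tup C f g"

lemma category: "category C"
  using fp_category unfolding fp_category_def by blast

lemma cdom_in_Ob [simp]: "f \<in> Ar C \<Longrightarrow> cdom C f \<in> Ob C"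
  and ccod_in_Ob [simp]: "f \<in> Ar C \<Longrightarrow> ccod C f \<in> Ob C"
  using category unfolding category_def by blast+

lemma cid_in_Ar [simp]: "A \<in> Ob C \<Longrightarrow> cid C A \<in> Ar C"
  and cdom_cid [simp]: "A \<in> Ob C \<Longrightarrow> cdom C (cid C A) = A"
  and ccod_cid [simp]: "A \<in> Ob C \<Longrightarrow> ccod C (cid C A) = A"
  using category unfolding category_def hom_def by blast+

lemma comp_in_Ar [simp]: "f \<in> Ar C \<Longrightarrow> g \<in> Ar C \<Longrightarrow> ccod C f = cdom C g \<Longrightarrow> g \<cdot> f \<in> Ar C"
  and cdom_comp [simp]: "f \<in> Ar C \<Longrightarrow> g \<in> Ar C \<Longrightarrow> ccod C f = cdom C g \<Longrightarrow> cdom C (g \<cdot> f) = cdom C f"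
  and ccod_comp [simp]: "f \<in> Ar C \<Longrightarrow> g \<in> Ar C \<Longrightarrow> ccod C f = cdom C g \<Longrightarrow> ccod C (g \<cdot> f) = ccod C g"
  using category unfolding category_def hom_def by blast+

lemma comp_cid_right [simp]: "f \<in> Ar C \<Longrightarrow> cdom C f = A \<Longrightarrow> f \<cdot> cid C A = f"
  and comp_cid_left [simp]: "f \<in> Ar C \<Longrightarrow> ccod C f = A \<Longrightarrow> cid C A \<cdot> f = f"
  using category unfolding category_def by blast+

lemma comp_assoc [simp]:
  "f \<in> Ar C \<Longrightarrow> g \<in> Ar C \<Longrightarrow> h \<in> Ar C \<Longrightarrow> ccod C f = cdom C g \<Longrightarrow> ccod C g = cdom C h \<Longrightarrow>
   (h \<cdot> g) \<cdot> f = h \<cdot> (g \<cdot> f)"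
  using category unfolding category_def by metis

lemma prd_in_Ob [simp]: "A \<in> Ob C \<Longrightarrow> B \<in> Ob C \<Longrightarrow> A \<otimes> B \<in> Ob C"
  using fp_category unfolding fp_category_def by blast

lemma pj1_in_Ar [simp]: "A \<in> Ob C \<Longrightarrow> B \<in> Ob C \<Longrightarrow> pj1 C A B \<in> Ar C"
  and cdom_pj1 [simp]: "A \<in> Ob C \<Longrightarrow> B \<in> Ob C \<Longrightarrow> cdom C (pj1 C A B) = A \<otimes> B"
  and ccod_pj1 [simp]: "A \<in> Ob C \<Longrightarrow> B \<in> Ob C \<Longrightarrow> ccod C (pj1 C A B) = A"
  and pj2_in_Ar [simp]: "A \<in> Ob C \<Longrightarrow> B \<in> Ob C \<Longrightarrow> pj2 C A B \<in> Ar C"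
  and cdom_pj2 [simp]: "A \<in> Ob C \<Longrightarrow> B \<in> Ob C \<Longrightarrow> cdom C (pj2 C A B) = A \<otimes> B"
  and ccod_pj2 [simp]: "A \<in> Ob C \<Longrightarrow> B \<in> Ob C \<Longrightarrow> ccod C (pj2 C A B) = B"
  using fp_category unfolding fp_category_def hom_def by blast+

lemma tup_universal:
  assumes "f \<in> Ar C" "g \<in> Ar C" "cdom C f = cdom C g"
  defines "A \<equiv> ccod C f" and "B \<equiv> ccod C g"
  shows "\<langle>f, g\<rangle> \<in> hom C (cdom C f) (A \<otimes> B) \<and> pj1 C A B \<cdot> \<langle>f, g\<rangle> = f \<and> pj2 C A B \<cdot> \<langle>f, g\<rangle> = g \<and>
    (\<forall>h\<in>hom C (cdom C f) (A \<otimes> B). pj1 C A B \<cdot> h = f \<and> pj2 C A B \<cdot> h = g \<longrightarrow> h = \<langle>f, g\<rangle>)"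
proof -
  have "f \<in> hom C (cdom C f) A" "g \<in> hom C (cdom C f) B"
    using assms unfolding hom_def by auto
  then show ?thesis
    using fp_category assms unfolding fp_category_def by (metis ccod_in_Ob cdom_in_Ob)
qed

lemma tup_in_Ar [simp]: "f \<in> Ar C \<Longrightarrow> g \<in> Ar C \<Longrightarrow> cdom C f = cdom C g \<Longrightarrow> \<langle>f, g\<rangle> \<in> Ar C"
  and cdom_tup [simp]: "f \<in> Ar C \<Longrightarrow> g \<in> Ar C \<Longrightarrow> cdom C f = cdom C g \<Longrightarrow> cdom C \<langle>f, g\<rangle> = cdom C f"
  and ccod_tup [simp]:
    "f \<in> Ar C \<Longrightarrow> g \<in> Ar C \<Longrightarrow> cdom C f = cdom C g \<Longrightarrow> ccod C \<langle>f, g\<rangle> = ccod C f \<otimes> ccod C g"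
  using tup_universal unfolding hom_def by blast+

lemma pj1_tup [simp]:
    "f \<in> Ar C \<Longrightarrow> g \<in> Ar C \<Longrightarrow> cdom C f = cdom C g \<Longrightarrow> ccod C f = A \<Longrightarrow> ccod C g = B \<Longrightarrow>
     pj1 C A B \<cdot> \<langle>f, g\<rangle> = f"
  and pj2_tup [simp]:
    "f \<in> Ar C \<Longrightarrow> g \<in> Ar C \<Longrightarrow> cdom C f = cdom C g \<Longrightarrow> ccod C f = A \<Longrightarrow> ccod C g = B \<Longrightarrow>
     pj2 C A B \<cdot> \<langle>f, g\<rangle> = g"
  using tup_universal by blast+

lemma tup_eta [simp]:
  assumes "h \<in> Ar C" "ccod C h = A \<otimes> B" "A \<in> Ob C" "B \<in> Ob C"
  shows "\<langle>pj1 C A B \<cdot> h, pj2 C A B \<cdot> h\<rangle> = h"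
proof -
  have "h \<in> hom C (cdom C (pj1 C A B \<cdot> h)) (ccod C (pj1 C A B \<cdot> h) \<otimes> ccod C (pj2 C A B \<cdot> h))"
    using assms unfolding hom_def by simp
  then show ?thesis
    using tup_universal[of "pj1 C A B \<cdot> h" "pj2 C A B \<cdot> h"] assms by simp
qed

lemma tup_pj [simp]: "A \<in> Ob C \<Longrightarrow> B \<in> Ob C \<Longrightarrow> \<langle>pj1 C A B, pj2 C A B\<rangle> = cid C (A \<otimes> B)"
  using tup_eta[of "cid C (A \<otimes> B)" A B] by simp

lemma tup_comp [simp]:
  assumes "f \<in> Ar C" "g \<in> Ar C" "h \<in> Ar C" "cdom C f = cdom C g" "ccod C h = cdom C f"
  shows "\<langle>f, g\<rangle> \<cdot> h = \<langle>f \<cdot> h, g \<cdot> h\<rangle>"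
proof -
  let ?A = "ccod C f" and ?B = "ccod C g"
  have "pj1 C ?A ?B \<cdot> (\<langle>f, g\<rangle> \<cdot> h) = f \<cdot> h" "pj2 C ?A ?B \<cdot> (\<langle>f, g\<rangle> \<cdot> h) = g \<cdot> h"
    using assms comp_assoc[of h "\<langle>f, g\<rangle>" "pj1 C ?A ?B"] comp_assoc[of h "\<langle>f, g\<rangle>" "pj2 C ?A ?B"]
    by simp_all
  then show ?thesis
    using tup_eta[of "\<langle>f, g\<rangle> \<cdot> h" ?A ?B] assms by simp
qed

lemma fprod_in_Ar [simp]: "f \<in> Ar C \<Longrightarrow> g \<in> Ar C \<Longrightarrow> fprod C f g \<in> Ar C"
  and cdom_fprod [simp]: "f \<in> Ar C \<Longrightarrow> g \<in> Ar C \<Longrightarrow> cdom C (fprod C f g) = cdom C f \<otimes> cdom C g"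
  and ccod_fprod [simp]: "f \<in> Ar C \<Longrightarrow> g \<in> Ar C \<Longrightarrow> ccod C (fprod C f g) = ccod C f \<otimes> ccod C g"
  by (simp_all add: fprod_def)

lemma pj1_fprod [simp]:
    "f \<in> Ar C \<Longrightarrow> g \<in> Ar C \<Longrightarrow> ccod C f = A \<Longrightarrow> ccod C g = B \<Longrightarrow>
     pj1 C A B \<cdot> fprod C f g = f \<cdot> pj1 C (cdom C f) (cdom C g)"
  and pj2_fprod [simp]:
    "f \<in> Ar C \<Longrightarrow> g \<in> Ar C \<Longrightarrow> ccod C f = A \<Longrightarrow> ccod C g = B \<Longrightarrow>
     pj2 C A B \<cdot> fprod C f g = g \<cdot> pj2 C (cdom C f) (cdom C g)"
  by (simp_all add: fprod_def)

lemma fprod_comp_tup [simp]: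
  "f \<in> Ar C \<Longrightarrow> g \<in> Ar C \<Longrightarrow> h \<in> Ar C \<Longrightarrow> k \<in> Ar C \<Longrightarrow> cdom C h = cdom C k \<Longrightarrow>
   ccod C h = cdom C f \<Longrightarrow> ccod C k = cdom C g \<Longrightarrow> fprod C f g \<cdot> \<langle>h, k\<rangle> = \<langle>f \<cdot> h, g \<cdot> k\<rangle>"
  by (simp add: fprod_def)

lemma fprod_cid [simp]: "A \<in> Ob C \<Longrightarrow> B \<in> Ob C \<Longrightarrow> fprod C (cid C A) (cid C B) = cid C (A \<otimes> B)"
  by (simp add: fprod_def)

lemma fprod_comp:
  "f \<in> Ar C \<Longrightarrow> g \<in> Ar C \<Longrightarrow> f' \<in> Ar C \<Longrightarrow> g' \<in> Ar C \<Longrightarrow> ccod C f = cdom C g \<Longrightarrow> ccod C f' = cdom C g' \<Longrightarrow>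
   fprod C (g \<cdot> f) (g' \<cdot> f') = fprod C g g' \<cdot> fprod C f f'"
  by (simp add: fprod_def)

text \<open>The universal completion quantifies along \<open>p : X \<rightarrow> A\<close> by moving the fibre of \<open>p\<close> into
  the bound object, \<open>\<forall>\<^sub>p (D, \<alpha>) = (Y D, P(\<theta> D) \<alpha>)\<close>; the sections \<open>\<psi> D\<close> transport
  instantiations back.  For the product projections, \<open>\<theta>\<close> is reassociation.\<close>
definition retractions_over :: "'a \<Rightarrow> 'o \<Rightarrow> 'o \<Rightarrow> ('o \<Rightarrow> 'o) \<Rightarrow> ('o \<Rightarrow> 'a) \<Rightarrow> ('o \<Rightarrow> 'a) \<Rightarrow> bool" where
  "retractions_over p A X Y \<theta> \<psi> \<longleftrightarrow> p \<in> hom C X A \<and>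
     (\<forall>D\<in>Ob C. Y D \<in> Ob C \<and> \<theta> D \<in> hom C (A \<otimes> Y D) (X \<otimes> D) \<and> \<psi> D \<in> hom C (X \<otimes> D) (A \<otimes> Y D) \<and>
        \<theta> D \<cdot> \<psi> D = cid C (X \<otimes> D) \<and> p \<cdot> pj1 C X D \<cdot> \<theta> D = pj1 C A (Y D))"

lemma retractions_overD:
  assumes "retractions_over p A X Y \<theta> \<psi>" "D \<in> Ob C"
  shows "p \<in> Ar C" "cdom C p = X" "ccod C p = A" "X \<in> Ob C" "A \<in> Ob C" "Y D \<in> Ob C"
    "\<theta> D \<in> Ar C" "cdom C (\<theta> D) = A \<otimes> Y D" "ccod C (\<theta> D) = X \<otimes> D"
    "\<psi> D \<in> Ar C" "cdom C (\<psi> D) = X \<otimes> D" "ccod C (\<psi> D) = A \<otimes> Y D"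
    "\<theta> D \<cdot> \<psi> D = cid C (X \<otimes> D)" "p \<cdot> pj1 C X D \<cdot> \<theta> D = pj1 C A (Y D)"
  using assms unfolding retractions_over_def hom_def by auto

lemma retractions_over_tup_comp:
  assumes "retractions_over p A X Y \<theta> \<psi>" "D \<in> Ob C" "g \<in> Ar C" "cdom C g = X \<otimes> D" "ccod C g = B"
  shows "fprod C p (cid C B) \<cdot> \<langle>pj1 C X D, g\<rangle> \<cdot> \<theta> D = \<langle>pj1 C A (Y D), g \<cdot> \<theta> D\<rangle>"
proof -
  note r = retractions_overD[OF assms(1,2)]
  have "fprod C p (cid C B) \<cdot> \<langle>pj1 C X D, g\<rangle> \<cdot> \<theta> D = \<langle>p \<cdot> pj1 C X D \<cdot> \<theta> D, g \<cdot> \<theta> D\<rangle>"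
    using r(1-13) assms(2-5) ccod_in_Ob[OF assms(3)] by simp
  then show ?thesis
    unfolding r(14) .
qed

lemma retractions_over_tup_section:
  assumes "retractions_over p A X Y \<theta> \<psi>" "D \<in> Ob C" "h \<in> Ar C" "cdom C h = A \<otimes> Y D" "ccod C h = B"
  shows "fprod C p (cid C B) \<cdot> \<langle>pj1 C X D, h \<cdot> \<psi> D\<rangle> = \<langle>pj1 C A (Y D), h\<rangle> \<cdot> \<psi> D"
proof -
  note r = retractions_overD[OF assms(1,2)]
  have "pj1 C A (Y D) \<cdot> \<psi> D = (p \<cdot> pj1 C X D \<cdot> \<theta> D) \<cdot> \<psi> D"
    using r(14) by simp
  also have "\<dots> = p \<cdot> pj1 C X D \<cdot> \<theta> D \<cdot> \<psi> D"
    using r(1-13) assms(2) by simp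
  also have "\<dots> = p \<cdot> pj1 C X D"
    using r(1-13) assms(2) by simp
  finally show ?thesis
    using r(1-13) assms(2-5) ccod_in_Ob[OF assms(3)] by simp
qed

definition reassoc1 :: "'o \<Rightarrow> 'o \<Rightarrow> 'o \<Rightarrow> 'a" where
  "reassoc1 A1 A2 D =
     \<langle>\<langle>pj1 C A1 (A2 \<otimes> D), pj1 C A2 D \<cdot> pj2 C A1 (A2 \<otimes> D)\<rangle>, pj2 C A2 D \<cdot> pj2 C A1 (A2 \<otimes> D)\<rangle>"

definition reassoc1_inv :: "'o \<Rightarrow> 'o \<Rightarrow> 'o \<Rightarrow> 'a" where
  "reassoc1_inv A1 A2 D =
     \<langle>pj1 C A1 A2 \<cdot> pj1 C (A1 \<otimes> A2) D, \<langle>pj2 C A1 A2 \<cdot> pj1 C (A1 \<otimes> A2) D, pj2 C (A1 \<otimes> A2) D\<rangle>\<rangle>"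

definition reassoc2 :: "'o \<Rightarrow> 'o \<Rightarrow> 'o \<Rightarrow> 'a" where
  "reassoc2 A1 A2 D =
     \<langle>\<langle>pj1 C A1 D \<cdot> pj2 C A2 (A1 \<otimes> D), pj1 C A2 (A1 \<otimes> D)\<rangle>, pj2 C A1 D \<cdot> pj2 C A2 (A1 \<otimes> D)\<rangle>"

definition reassoc2_inv :: "'o \<Rightarrow> 'o \<Rightarrow> 'o \<Rightarrow> 'a" where
  "reassoc2_inv A1 A2 D =
     \<langle>pj2 C A1 A2 \<cdot> pj1 C (A1 \<otimes> A2) D, \<langle>pj1 C A1 A2 \<cdot> pj1 C (A1 \<otimes> A2) D, pj2 C (A1 \<otimes> A2) D\<rangle>\<rangle>"

lemma retractions_over_reassoc1:
  "A1 \<in> Ob C \<Longrightarrow> A2 \<in> Ob C \<Longrightarrow>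
   retractions_over (pj1 C A1 A2) A1 (A1 \<otimes> A2) (prd C A2) (reassoc1 A1 A2) (reassoc1_inv A1 A2)"
  by (simp add: retractions_over_def hom_def reassoc1_def reassoc1_inv_def)

lemma retractions_over_reassoc2:
  "A1 \<in> Ob C \<Longrightarrow> A2 \<in> Ob C \<Longrightarrow>
   retractions_over (pj2 C A1 A2) A2 (A1 \<otimes> A2) (prd C A1) (reassoc2 A1 A2) (reassoc2_inv A1 A2)"
  by (simp add: retractions_over_def hom_def reassoc2_def reassoc2_inv_def)

lemma reassoc1_natural:
  "f \<in> hom C A' A \<Longrightarrow> B \<in> Ob C \<Longrightarrow> D \<in> Ob C \<Longrightarrow>
   fprod C (fprod C f (cid C B)) (cid C D) \<cdot> reassoc1 A' B D = reassoc1 A B D \<cdot> fprod C f (cid C (B \<otimes> D))"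
  by (clarsimp simp: hom_def reassoc1_def)

lemma reassoc2_natural:
  "f \<in> hom C A' A \<Longrightarrow> B \<in> Ob C \<Longrightarrow> D \<in> Ob C \<Longrightarrow>
   fprod C (fprod C (cid C B) f) (cid C D) \<cdot> reassoc2 B A' D = reassoc2 B A D \<cdot> fprod C f (cid C (B \<otimes> D))"
  by (clarsimp simp: hom_def reassoc2_def)

end

section \<open>The universal completion is a doctrine\<close>

locale slat_doc =
  fixes C :: "('o,'a,'m) fpcat_scheme" and P :: "('o,'a,'e) doctrine"
  assumes slat_doctrine: "slat_doctrine C P"

sublocale slat_doc \<subseteq> fp_cat C
  using slat_doctrine unfolding slat_doctrine_def by unfold_locales (elim conjE)

context slat_doc
begin

lemma P_le_refl: "A \<in> Ob C \<Longrightarrow> x \<in> carr P A \<Longrightarrow> le P A x x"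
  using slat_doctrine unfolding slat_doctrine_def by (elim conjE) metis

lemma P_le_trans:
  "le P A x y \<Longrightarrow> le P A y z \<Longrightarrow> A \<in> Ob C \<Longrightarrow> x \<in> carr P A \<Longrightarrow> y \<in> carr P A \<Longrightarrow> z \<in> carr P A \<Longrightarrow>
   le P A x z"
  using slat_doctrine unfolding slat_doctrine_def by (elim conjE) metis

lemma rmap_in_carr [simp]:
  "f \<in> Ar C \<Longrightarrow> cdom C f = X \<Longrightarrow> ccod C f = Y \<Longrightarrow> y \<in> carr P Y \<Longrightarrow> rmap P f y \<in> carr P X"
  using slat_doctrine unfolding slat_doctrine_def by (elim conjE) metis

lemma rmap_mono:
  "f \<in> Ar C \<Longrightarrow> cdom C f = X \<Longrightarrow> ccod C f = Y \<Longrightarrow> y \<in> carr P Y \<Longrightarrow> y' \<in> carr P Y \<Longrightarrow>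
   le P Y y y' \<Longrightarrow> le P X (rmap P f y) (rmap P f y')"
  using slat_doctrine unfolding slat_doctrine_def by (elim conjE) metis

lemma rmap_cid [simp]: "A \<in> Ob C \<Longrightarrow> x \<in> carr P A \<Longrightarrow> rmap P (cid C A) x = x"
  using slat_doctrine unfolding slat_doctrine_def by (elim conjE) metis

lemma rmap_comp:
  "f \<in> Ar C \<Longrightarrow> g \<in> Ar C \<Longrightarrow> ccod C f = cdom C g \<Longrightarrow> z \<in> carr P (ccod C g) \<Longrightarrow>
   rmap P (g \<cdot> f) z = rmap P f (rmap P g z)"
  using slat_doctrine unfolding slat_doctrine_def by (elim conjE) metis

lemma rmap_comp3:
  "f \<in> Ar C \<Longrightarrow> g \<in> Ar C \<Longrightarrow> h \<in> Ar C \<Longrightarrow> ccod C f = cdom C g \<Longrightarrow> ccod C g = cdom C h \<Longrightarrow>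
   z \<in> carr P (ccod C h) \<Longrightarrow> rmap P (h \<cdot> g \<cdot> f) z = rmap P f (rmap P g (rmap P h z))"
  by (simp add: rmap_comp)

lemma rmap_comm_square:
  "a \<in> Ar C \<Longrightarrow> b \<in> Ar C \<Longrightarrow> c \<in> Ar C \<Longrightarrow> d \<in> Ar C \<Longrightarrow> ccod C a = cdom C b \<Longrightarrow> ccod C c = cdom C d \<Longrightarrow>
   ccod C b = Z \<Longrightarrow> ccod C d = Z \<Longrightarrow> x \<in> carr P Z \<Longrightarrow> b \<cdot> a = d \<cdot> c \<Longrightarrow>
   rmap P a (rmap P b x) = rmap P c (rmap P d x)"
  by (metis rmap_comp)

abbreviation "raw \<equiv> un_raw C P"
abbreviation "pre \<equiv> un_pre C P"
abbreviation "cls \<equiv> un_class C P"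
abbreviation "U \<equiv> un_completion C P"

lemma Pair_in_un_raw_iff [simp]: "(B, \<alpha>) \<in> raw A \<longleftrightarrow> B \<in> Ob C \<and> \<alpha> \<in> carr P (A \<otimes> B)"
  by (simp add: un_raw_def)

lemma un_pre_iff:
  "pre A (B, \<alpha>) (D, \<beta>) \<longleftrightarrow>
   (\<exists>g\<in>Ar C. cdom C g = A \<otimes> D \<and> ccod C g = B \<and> le P (A \<otimes> D) (rmap P \<langle>pj1 C A D, g\<rangle> \<alpha>) \<beta>)"
  by (auto simp: un_pre_def hom_def)

lemma un_pre_refl:
  assumes "A \<in> Ob C" "p \<in> raw A"
  shows "pre A p p"
proof -
  obtain B \<alpha> where p: "p = (B, \<alpha>)" by fastforce
  show ?thesis
    using assms unfolding p un_pre_iff by (intro bexI[of _ "pj2 C A B"]) (auto intro: P_le_refl)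
qed

lemma un_pre_trans:
  assumes A: "A \<in> Ob C" and "p \<in> raw A" "q \<in> raw A" "r \<in> raw A" "pre A p q" "pre A q r"
  shows "pre A p r"
proof -
  obtain B \<alpha> D \<beta> E \<gamma> where pqr: "p = (B, \<alpha>)" "q = (D, \<beta>)" "r = (E, \<gamma>)"
    by (cases p, cases q, cases r)
  have raw: "B \<in> Ob C" "\<alpha> \<in> carr P (A \<otimes> B)" "D \<in> Ob C" "\<beta> \<in> carr P (A \<otimes> D)"
    "E \<in> Ob C" "\<gamma> \<in> carr P (A \<otimes> E)"
    using assms unfolding pqr by auto
  obtain g where g: "g \<in> Ar C" "cdom C g = A \<otimes> D" "ccod C g = B"
    and g_le: "le P (A \<otimes> D) (rmap P \<langle>pj1 C A D, g\<rangle> \<alpha>) \<beta>"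
    using assms(5) unfolding pqr un_pre_iff by blast
  obtain h where h: "h \<in> Ar C" "cdom C h = A \<otimes> E" "ccod C h = D"
    and h_le: "le P (A \<otimes> E) (rmap P \<langle>pj1 C A E, h\<rangle> \<beta>) \<gamma>"
    using assms(6) unfolding pqr un_pre_iff by blast
  let ?k = "g \<cdot> \<langle>pj1 C A E, h\<rangle>"
  have k: "\<langle>pj1 C A E, ?k\<rangle> = \<langle>pj1 C A D, g\<rangle> \<cdot> \<langle>pj1 C A E, h\<rangle>"
    using g h A raw by simp
  have "rmap P \<langle>pj1 C A E, ?k\<rangle> \<alpha> = rmap P \<langle>pj1 C A E, h\<rangle> (rmap P \<langle>pj1 C A D, g\<rangle> \<alpha>)"
    unfolding k using g h A raw by (intro rmap_comp) auto
  also have "le P (A \<otimes> E) \<dots> (rmap P \<langle>pj1 C A E, h\<rangle> \<beta>)"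
    using g h A raw g_le by (intro rmap_mono) auto
  finally have "le P (A \<otimes> E) (rmap P \<langle>pj1 C A E, ?k\<rangle> \<alpha>) (rmap P \<langle>pj1 C A E, h\<rangle> \<beta>)" .
  from P_le_trans[OF this h_le] have "le P (A \<otimes> E) (rmap P \<langle>pj1 C A E, ?k\<rangle> \<alpha>) \<gamma>"
    using g h A raw by auto
  then show ?thesis
    using g h A raw unfolding pqr un_pre_iff by (intro bexI[of _ ?k]) auto
qed

lemma un_class_self: "A \<in> Ob C \<Longrightarrow> p \<in> raw A \<Longrightarrow> p \<in> cls A p"
  by (simp add: un_class_def un_equiv_def un_pre_refl)

lemma un_class_eq:
  assumes "A \<in> Ob C" "p \<in> raw A" "q \<in> raw A" "pre A p q" "pre A q p"
  shows "cls A p = cls A q"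
proof -
  have "pre A p r \<and> pre A r p \<longleftrightarrow> pre A q r \<and> pre A r q" if "r \<in> raw A" for r
    using un_pre_trans[OF assms(1) _ _ that] un_pre_trans[OF assms(1) that] assms by meson
  then show ?thesis
    unfolding un_class_def un_equiv_def by blast
qed

lemma UN_un_class:
  assumes "A \<in> Ob C" "A' \<in> Ob C" "p \<in> raw A"
    and F_raw: "\<And>q. q \<in> raw A \<Longrightarrow> F q \<in> raw A'"
    and F_mono: "\<And>q q'. q \<in> raw A \<Longrightarrow> q' \<in> raw A \<Longrightarrow> pre A q q' \<Longrightarrow> pre A' (F q) (F q')"
  shows "(\<Union>q\<in>cls A p. cls A' (F q)) = cls A' (F p)"
proof -
  have "cls A' (F q) = cls A' (F p)" if "q \<in> cls A p" for q
  proof -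
    have "q \<in> raw A" "pre A p q" "pre A q p"
      using that unfolding un_class_def un_equiv_def by auto
    then show ?thesis
      using assms by (intro un_class_eq) auto
  qed
  then show ?thesis
    using un_class_self[OF assms(1,3)] by blast
qed

lemma carr_un_completion: "carr U A = cls A ` raw A"
  by (simp add: un_completion_def)

lemma in_carr_un_completionE:
  assumes "x \<in> carr U A"
  obtains p where "p \<in> raw A" "x = cls A p"
  using assms unfolding carr_un_completion by blast

lemma le_un_completion_class_iff:
  assumes "A \<in> Ob C" "p \<in> raw A" "q \<in> raw A"
  shows "le U A (cls A p) (cls A q) \<longleftrightarrow> pre A p q"
proof
  assume "le U A (cls A p) (cls A q)"
  then obtain p' q' where "p' \<in> cls A p" "q' \<in> cls A q" "pre A p' q'"
    by (auto simp: un_completion_def)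
  then have "p' \<in> raw A" "q' \<in> raw A" "pre A p p'" "pre A p' q'" "pre A q' q"
    unfolding un_class_def un_equiv_def by auto
  then show "pre A p q"
    using assms by (meson un_pre_trans)
next
  assume "pre A p q"
  then show "le U A (cls A p) (cls A q)"
    using un_class_self[OF assms(1,2)] un_class_self[OF assms(1,3)] by (auto simp: un_completion_def)
qed

definition raw_reindex :: "'a \<Rightarrow> 'o \<times> 'e \<Rightarrow> 'o \<times> 'e" where
  "raw_reindex f = (\<lambda>(D, \<gamma>). (D, rmap P (fprod C f (cid C D)) \<gamma>))"

lemma raw_reindex_Pair [simp]: "raw_reindex f (D, \<gamma>) = (D, rmap P (fprod C f (cid C D)) \<gamma>)"
  by (simp add: raw_reindex_def)

lemma rmap_un_completion: "rmap U f x = (\<Union>q\<in>x. cls (cdom C f) (raw_reindex f q))"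
  by (simp add: un_completion_def raw_reindex_def split_def)

lemma raw_reindex_in_raw:
  "f \<in> Ar C \<Longrightarrow> cdom C f = X \<Longrightarrow> ccod C f = Y \<Longrightarrow> q \<in> raw Y \<Longrightarrow> raw_reindex f q \<in> raw X"
  by (cases q) auto

lemma raw_reindex_mono:
  assumes f: "f \<in> Ar C" "cdom C f = X" "ccod C f = Y"
    and q: "q \<in> raw Y" "q' \<in> raw Y" and "pre Y q q'"
  shows "pre X (raw_reindex f q) (raw_reindex f q')"
proof -
  obtain D \<gamma> D' \<gamma>' where qq': "q = (D, \<gamma>)" "q' = (D', \<gamma>')"
    by (cases q, cases q')
  have raw: "D \<in> Ob C" "\<gamma> \<in> carr P (Y \<otimes> D)" "D' \<in> Ob C" "\<gamma>' \<in> carr P (Y \<otimes> D')"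
    using q unfolding qq' by auto
  obtain g where g: "g \<in> Ar C" "cdom C g = Y \<otimes> D'" "ccod C g = D"
    and g_le: "le P (Y \<otimes> D') (rmap P \<langle>pj1 C Y D', g\<rangle> \<gamma>) \<gamma>'"
    using assms(6) unfolding qq' un_pre_iff by blast
  let ?g' = "g \<cdot> fprod C f (cid C D')"
  have "rmap P \<langle>pj1 C X D', ?g'\<rangle> (rmap P (fprod C f (cid C D)) \<gamma>)
      = rmap P (fprod C f (cid C D')) (rmap P \<langle>pj1 C Y D', g\<rangle> \<gamma>)"
    using f g raw by (intro rmap_comm_square[where Z = "Y \<otimes> D"]) auto
  also have "le P (X \<otimes> D') \<dots> (rmap P (fprod C f (cid C D')) \<gamma>')"
    using f g raw g_le by (intro rmap_mono) auto
  finally show ?thesis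
    using f g raw unfolding qq' raw_reindex_Pair un_pre_iff by (intro bexI[of _ ?g']) auto
qed

lemma raw_reindex_cid: "A \<in> Ob C \<Longrightarrow> p \<in> raw A \<Longrightarrow> raw_reindex (cid C A) p = p"
  by (cases p) simp

lemma raw_reindex_comp:
  assumes "f \<in> Ar C" "g \<in> Ar C" "ccod C f = cdom C g" "p \<in> raw (ccod C g)"
  shows "raw_reindex (g \<cdot> f) p = raw_reindex f (raw_reindex g p)"
proof -
  obtain D \<gamma> where p: "p = (D, \<gamma>)" by (cases p)
  have "fprod C (g \<cdot> f) (cid C D) = fprod C g (cid C D) \<cdot> fprod C f (cid C D)"
    using assms fprod_comp[of f g "cid C D" "cid C D"] unfolding p by simp
  then show ?thesis
    using assms unfolding p by (simp add: rmap_comp)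
qed

lemma rmap_un_completion_class:
  assumes "f \<in> Ar C" "cdom C f = X" "ccod C f = Y" "p \<in> raw Y"
  shows "rmap U f (cls Y p) = cls X (raw_reindex f p)"
proof -
  have "rmap U f (cls Y p) = (\<Union>q\<in>cls Y p. cls X (raw_reindex f q))"
    unfolding rmap_un_completion using assms by simp
  also have "\<dots> = cls X (raw_reindex f p)"
    using assms by (intro UN_un_class raw_reindex_in_raw raw_reindex_mono) auto
  finally show ?thesis .
qed

lemma le_un_completion_refl: "A \<in> Ob C \<Longrightarrow> x \<in> carr U A \<Longrightarrow> le U A x x"
  by (erule in_carr_un_completionE) (simp add: le_un_completion_class_iff un_pre_refl)

lemma le_un_completion_trans:
  assumes "A \<in> Ob C" "x \<in> carr U A" "y \<in> carr U A" "z \<in> carr U A" "le U A x y" "le U A y z"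
  shows "le U A x z"
proof -
  obtain p q r where "p \<in> raw A" "q \<in> raw A" "r \<in> raw A" "x = cls A p" "y = cls A q" "z = cls A r"
    using assms(2-4) by (meson in_carr_un_completionE)
  then show ?thesis
    using assms(1,5,6) le_un_completion_class_iff un_pre_trans by metis
qed

lemma le_un_completion_antisym:
  assumes "A \<in> Ob C" "x \<in> carr U A" "y \<in> carr U A" "le U A x y" "le U A y x"
  shows "x = y"
proof -
  obtain p q where "p \<in> raw A" "q \<in> raw A" "x = cls A p" "y = cls A q"
    using assms(2,3) by (meson in_carr_un_completionE)
  then show ?thesis
    using assms(1,4,5) le_un_completion_class_iff un_class_eq by metis
qed

lemma rmap_un_completion_in_carr:
  assumes "f \<in> Ar C" "y \<in> carr U (ccod C f)"
  shows "rmap U f y \<in> carr U (cdom C f)"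
proof -
  obtain q where "q \<in> raw (ccod C f)" "y = cls (ccod C f) q"
    using assms(2) by (rule in_carr_un_completionE)
  then show ?thesis
    using assms(1) by (simp add: rmap_un_completion_class carr_un_completion raw_reindex_in_raw)
qed

lemma rmap_un_completion_mono:
  assumes f: "f \<in> Ar C" and "y \<in> carr U (ccod C f)" "y' \<in> carr U (ccod C f)" "le U (ccod C f) y y'"
  shows "le U (cdom C f) (rmap U f y) (rmap U f y')"
proof -
  obtain q q' where q: "q \<in> raw (ccod C f)" "y = cls (ccod C f) q"
    and q': "q' \<in> raw (ccod C f)" "y' = cls (ccod C f) q'"
    using assms(2,3) by (meson in_carr_un_completionE)
  have "pre (ccod C f) q q'"
    using assms(4) f q q' by (simp add: le_un_completion_class_iff)
  then have "pre (cdom C f) (raw_reindex f q) (raw_reindex f q')"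
    using f q q' by (intro raw_reindex_mono) auto
  then show ?thesis
    using f q q' by (simp add: rmap_un_completion_class le_un_completion_class_iff raw_reindex_in_raw)
qed

lemma rmap_un_completion_cid: "A \<in> Ob C \<Longrightarrow> x \<in> carr U A \<Longrightarrow> rmap U (cid C A) x = x"
  by (erule in_carr_un_completionE) (simp add: rmap_un_completion_class raw_reindex_cid)

lemma rmap_un_completion_comp:
  assumes fg: "f \<in> Ar C" "g \<in> Ar C" "ccod C f = cdom C g" and "z \<in> carr U (ccod C g)"
  shows "rmap U (g \<cdot> f) z = rmap U f (rmap U g z)"
proof -
  obtain q where q: "q \<in> raw (ccod C g)" "z = cls (ccod C g) q"
    using assms(4) by (rule in_carr_un_completionE)
  have "raw_reindex g q \<in> raw (cdom C g)"
    using fg q by (intro raw_reindex_in_raw) auto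
  then show ?thesis
    unfolding q(2) using fg q by (simp add: rmap_un_completion_class raw_reindex_comp)
qed

lemma slat_doctrine_un_completion: "slat_doctrine C U"
  unfolding slat_doctrine_def
  by (intro conjI ballI impI; (rule fp_category le_un_completion_refl le_un_completion_antisym
      rmap_un_completion_in_carr rmap_un_completion_mono rmap_un_completion_cid rmap_un_completion_comp
      le_un_completion_trans; assumption))

section \<open>Universal quantifiers in the universal completion\<close>

definition raw_forall :: "('o \<Rightarrow> 'o) \<Rightarrow> ('o \<Rightarrow> 'a) \<Rightarrow> 'o \<times> 'e \<Rightarrow> 'o \<times> 'e" where
  "raw_forall Y \<theta> = (\<lambda>(D, \<alpha>). (Y D, rmap P (\<theta> D) \<alpha>))"

lemma raw_forall_Pair [simp]: "raw_forall Y \<theta> (D, \<alpha>) = (Y D, rmap P (\<theta> D) \<alpha>)"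
  by (simp add: raw_forall_def)

lemma raw_forall_in_raw:
  "retractions_over p A X Y \<theta> \<psi> \<Longrightarrow> q \<in> raw X \<Longrightarrow> raw_forall Y \<theta> q \<in> raw A"
  by (cases q) (simp add: retractions_overD)

lemma pre_raw_reindex_iff:
  assumes ret: "retractions_over p A X Y \<theta> \<psi>" and "b \<in> raw A" "q \<in> raw X"
  shows "pre X (raw_reindex p b) q \<longleftrightarrow> pre A b (raw_forall Y \<theta> q)"
proof -
  obtain B \<beta> D \<alpha> where bq: "b = (B, \<beta>)" "q = (D, \<alpha>)"
    by (cases b, cases q)
  have raw: "B \<in> Ob C" "\<beta> \<in> carr P (A \<otimes> B)" "D \<in> Ob C" "\<alpha> \<in> carr P (X \<otimes> D)"
    using assms unfolding bq by auto
  note r = retractions_overD[OF ret raw(3)]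
  show ?thesis
    unfolding bq
  proof
    assume "pre X (raw_reindex p (B, \<beta>)) (D, \<alpha>)"
    then obtain g where g: "g \<in> Ar C" "cdom C g = X \<otimes> D" "ccod C g = B"
      and g_le: "le P (X \<otimes> D) (rmap P \<langle>pj1 C X D, g\<rangle> (rmap P (fprod C p (cid C B)) \<beta>)) \<alpha>"
      unfolding raw_reindex_Pair un_pre_iff by blast
    have eq: "\<langle>pj1 C A (Y D), g \<cdot> \<theta> D\<rangle> = fprod C p (cid C B) \<cdot> \<langle>pj1 C X D, g\<rangle> \<cdot> \<theta> D"
      using retractions_over_tup_comp[OF ret raw(3) g] by simp
    have "rmap P \<langle>pj1 C A (Y D), g \<cdot> \<theta> D\<rangle> \<beta>
        = rmap P (\<theta> D) (rmap P \<langle>pj1 C X D, g\<rangle> (rmap P (fprod C p (cid C B)) \<beta>))"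
      unfolding eq using r g raw by (intro rmap_comp3) auto
    also have "le P (A \<otimes> Y D) \<dots> (rmap P (\<theta> D) \<alpha>)"
      using r g raw g_le by (intro rmap_mono) auto
    finally show "pre A (B, \<beta>) (raw_forall Y \<theta> (D, \<alpha>))"
      using r g unfolding raw_forall_Pair un_pre_iff by (intro bexI[of _ "g \<cdot> \<theta> D"]) auto
  next
    assume "pre A (B, \<beta>) (raw_forall Y \<theta> (D, \<alpha>))"
    then obtain h where h: "h \<in> Ar C" "cdom C h = A \<otimes> Y D" "ccod C h = B"
      and h_le: "le P (A \<otimes> Y D) (rmap P \<langle>pj1 C A (Y D), h\<rangle> \<beta>) (rmap P (\<theta> D) \<alpha>)"
      unfolding raw_forall_Pair un_pre_iff by blast
    have "rmap P \<langle>pj1 C X D, h \<cdot> \<psi> D\<rangle> (rmap P (fprod C p (cid C B)) \<beta>)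
        = rmap P (\<psi> D) (rmap P \<langle>pj1 C A (Y D), h\<rangle> \<beta>)"
      using r h raw retractions_over_tup_section[OF ret raw(3) h]
      by (intro rmap_comm_square[where Z = "A \<otimes> B"]) auto
    also have "le P (X \<otimes> D) \<dots> (rmap P (\<psi> D) (rmap P (\<theta> D) \<alpha>))"
      using r h raw h_le by (intro rmap_mono) auto
    also have "rmap P (\<psi> D) (rmap P (\<theta> D) \<alpha>) = \<alpha>"
      using r raw rmap_comp[of "\<psi> D" "\<theta> D" \<alpha>] by simp
    finally show "pre X (raw_reindex p (B, \<beta>)) (D, \<alpha>)"
      using r h unfolding raw_reindex_Pair un_pre_iff by (intro bexI[of _ "h \<cdot> \<psi> D"]) auto
  qed
qed

lemma raw_forall_mono:
  assumes ret: "retractions_over p A X Y \<theta> \<psi>"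
    and "q \<in> raw X" "q' \<in> raw X" "pre X q q'"
  shows "pre A (raw_forall Y \<theta> q) (raw_forall Y \<theta> q')"
  \<comment> \<open>as for any right adjoint: through the counit \<open>p\<^sup>* (\<forall>q) \<le> q \<le> q'\<close>\<close>
proof -
  let ?b = "raw_forall Y \<theta> q"
  have A: "A \<in> Ob C" and X: "X \<in> Ob C" and p: "p \<in> Ar C" "cdom C p = X" "ccod C p = A"
    using ret unfolding retractions_over_def hom_def by auto
  have b: "?b \<in> raw A"
    using ret assms(2) by (rule raw_forall_in_raw)
  then have "pre X (raw_reindex p ?b) q"
    using pre_raw_reindex_iff[OF ret b assms(2)] un_pre_refl[OF A] by blast
  then have "pre X (raw_reindex p ?b) q'"
    using assms X p b by (meson un_pre_trans raw_reindex_in_raw)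
  then show ?thesis
    using pre_raw_reindex_iff[OF ret b assms(3)] by blast
qed

lemma raw_forall_raw_reindex:
  assumes ret: "retractions_over p A X Y \<theta> \<psi>" and ret': "retractions_over p' A' X' Y \<theta>' \<psi>'"
    and f: "f \<in> hom C A' A" and h: "h \<in> hom C X' X"
    and natural: "\<And>D. D \<in> Ob C \<Longrightarrow> fprod C h (cid C D) \<cdot> \<theta>' D = \<theta> D \<cdot> fprod C f (cid C (Y D))"
    and "q \<in> raw X"
  shows "raw_forall Y \<theta>' (raw_reindex h q) = raw_reindex f (raw_forall Y \<theta> q)"
proof -
  obtain D \<alpha> where q: "q = (D, \<alpha>)" by (cases q)
  have raw: "D \<in> Ob C" "\<alpha> \<in> carr P (X \<otimes> D)"
    using assms(6) unfolding q by auto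
  note r = retractions_overD[OF ret raw(1)] and r' = retractions_overD[OF ret' raw(1)]
  have "rmap P (\<theta>' D) (rmap P (fprod C h (cid C D)) \<alpha>) = rmap P (fprod C f (cid C (Y D))) (rmap P (\<theta> D) \<alpha>)"
    using r r' f h raw natural[OF raw(1)] unfolding hom_def
    by (intro rmap_comm_square[where Z = "X \<otimes> D"]) auto
  then show ?thesis
    unfolding q by simp
qed

definition un_forall :: "'o \<Rightarrow> ('o \<Rightarrow> 'o) \<Rightarrow> ('o \<Rightarrow> 'a) \<Rightarrow> ('o \<times> 'e) set \<Rightarrow> ('o \<times> 'e) set" where
  "un_forall A Y \<theta> x = (\<Union>q\<in>x. cls A (raw_forall Y \<theta> q))"

lemma un_forall_class:
  assumes ret: "retractions_over p A X Y \<theta> \<psi>" and "q \<in> raw X"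
  shows "un_forall A Y \<theta> (cls X q) = cls A (raw_forall Y \<theta> q)"
proof -
  have "A \<in> Ob C" "X \<in> Ob C"
    using ret unfolding retractions_over_def hom_def by auto
  then show ?thesis
    unfolding un_forall_def using assms
    by (intro UN_un_class raw_forall_in_raw[OF ret] raw_forall_mono[OF ret])
qed

lemma un_forall_in_carr:
  assumes "retractions_over p A X Y \<theta> \<psi>" "x \<in> carr U X"
  shows "un_forall A Y \<theta> x \<in> carr U A"
proof -
  obtain q where q: "q \<in> raw X" "x = cls X q"
    using assms(2) by (rule in_carr_un_completionE)
  show ?thesis
    unfolding q(2) carr_un_completion
    using un_forall_class[OF assms(1) q(1)] raw_forall_in_raw[OF assms(1) q(1)] by auto
qed

lemma le_rmap_un_forall_iff:
  assumes ret: "retractions_over p A X Y \<theta> \<psi>" and "b \<in> carr U A" "x \<in> carr U X"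
  shows "le U X (rmap U p b) x \<longleftrightarrow> le U A b (un_forall A Y \<theta> x)"
proof -
  obtain b' q where b': "b' \<in> raw A" "b = cls A b'" and q: "q \<in> raw X" "x = cls X q"
    using assms(2,3) by (meson in_carr_un_completionE)
  have A: "A \<in> Ob C" and X: "X \<in> Ob C" and p: "p \<in> Ar C" "cdom C p = X" "ccod C p = A"
    using ret unfolding retractions_over_def hom_def by auto
  have "le U X (rmap U p b) x \<longleftrightarrow> pre X (raw_reindex p b') q"
    unfolding b' q using p b' q X by (simp add: rmap_un_completion_class le_un_completion_class_iff raw_reindex_in_raw)
  also have "\<dots> \<longleftrightarrow> pre A b' (raw_forall Y \<theta> q)"
    by (rule pre_raw_reindex_iff[OF ret b'(1) q(1)])
  also have "\<dots> \<longleftrightarrow> le U A b (un_forall A Y \<theta> x)"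
    unfolding b' q using ret A b' q
    by (simp add: un_forall_class le_un_completion_class_iff raw_forall_in_raw)
  finally show ?thesis .
qed

lemma un_forall_rmap:
  assumes ret: "retractions_over p A X Y \<theta> \<psi>" and ret': "retractions_over p' A' X' Y \<theta>' \<psi>'"
    and f: "f \<in> hom C A' A" and h: "h \<in> hom C X' X"
    and natural: "\<And>D. D \<in> Ob C \<Longrightarrow> fprod C h (cid C D) \<cdot> \<theta>' D = \<theta> D \<cdot> fprod C f (cid C (Y D))"
    and "x \<in> carr U X"
  shows "un_forall A' Y \<theta>' (rmap U h x) = rmap U f (un_forall A Y \<theta> x)"
proof -
  obtain q where q: "q \<in> raw X" "x = cls X q"
    using assms(6) by (rule in_carr_un_completionE)
  have f': "f \<in> Ar C" "cdom C f = A'" "ccod C f = A" and h': "h \<in> Ar C" "cdom C h = X'" "ccod C h = X"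
    using f h unfolding hom_def by auto
  have "un_forall A' Y \<theta>' (rmap U h x) = cls A' (raw_forall Y \<theta>' (raw_reindex h q))"
    unfolding q(2) using ret' h' q(1)
    by (simp add: rmap_un_completion_class un_forall_class raw_reindex_in_raw)
  also have "\<dots> = cls A' (raw_reindex f (raw_forall Y \<theta> q))"
    using raw_forall_raw_reindex[OF ret ret' f h natural q(1)] by simp
  also have "\<dots> = rmap U f (un_forall A Y \<theta> x)"
    unfolding q(2) using ret f' q(1)
    by (simp add: rmap_un_completion_class un_forall_class raw_forall_in_raw)
  finally show ?thesis .
qed

lemma un_forall_reassoc1_rmap:
  assumes "A \<in> Ob C" "B \<in> Ob C" "A' \<in> Ob C" "f \<in> hom C A' A" "y \<in> carr U (A \<otimes> B)"
  shows "un_forall A' (prd C B) (reassoc1 A' B) (rmap U (fprod C f (cid C B)) y)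
       = rmap U f (un_forall A (prd C B) (reassoc1 A B) y)"
  using assms
  by (intro un_forall_rmap[OF retractions_over_reassoc1 retractions_over_reassoc1] reassoc1_natural)
    (auto simp: hom_def)

lemma un_forall_reassoc2_rmap:
  assumes "A \<in> Ob C" "B \<in> Ob C" "A' \<in> Ob C" "f \<in> hom C A' A" "y \<in> carr U (B \<otimes> A)"
  shows "un_forall A' (prd C B) (reassoc2 B A') (rmap U (fprod C (cid C B) f) y)
       = rmap U f (un_forall A (prd C B) (reassoc2 B A) y)"
  using assms
  by (intro un_forall_rmap[OF retractions_over_reassoc2 retractions_over_reassoc2] reassoc2_natural)
    (auto simp: hom_def)

lemma universal_doctrine_un_completion: "universal_doctrine C U"
  unfolding universal_doctrine_def
proof (rule conjI[OF slat_doctrine_un_completion],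
    rule exI[of _ "\<lambda>A1 A2. un_forall A1 (prd C A2) (reassoc1 A1 A2)"],
    rule exI[of _ "\<lambda>A1 A2. un_forall A2 (prd C A1) (reassoc2 A1 A2)"], intro conjI ballI)
  fix A1 A2 assume "A1 \<in> Ob C" "A2 \<in> Ob C"
  note ret1 = retractions_over_reassoc1[OF this] and ret2 = retractions_over_reassoc2[OF this]
  fix y assume y: "y \<in> carr U (A1 \<otimes> A2)"
  show "un_forall A1 (prd C A2) (reassoc1 A1 A2) y \<in> carr U A1"
    using ret1 y by (rule un_forall_in_carr)
  show "un_forall A2 (prd C A1) (reassoc2 A1 A2) y \<in> carr U A2"
    using ret2 y by (rule un_forall_in_carr)
  fix x
  show "x \<in> carr U A1 \<Longrightarrow>
      le U (A1 \<otimes> A2) (rmap U (pj1 C A1 A2) x) y \<longleftrightarrow> le U A1 x (un_forall A1 (prd C A2) (reassoc1 A1 A2) y)"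
    using ret1 y by (intro le_rmap_un_forall_iff)
  show "x \<in> carr U A2 \<Longrightarrow>
      le U (A1 \<otimes> A2) (rmap U (pj2 C A1 A2) x) y \<longleftrightarrow> le U A2 x (un_forall A2 (prd C A1) (reassoc2 A1 A2) y)"
    using ret2 y by (intro le_rmap_un_forall_iff)
qed (simp_all add: un_forall_reassoc1_rmap un_forall_reassoc2_rmap)

end

theorem theorem2:
  assumes "slat_doctrine C P"
  shows "universal_doctrine C (un_completion C P)"
  using assms by (rule slat_doc.universal_doctrine_un_completion[OF slat_doc.intro])

end
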